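(* Assume $f_{\sigma,-1}\in H_{-\frac12}$. For any $u\in\mathcal{KN}$ with $u(0)\in\mathcal{A}$ and any $s>0$, the function $u_s(\cdot):=u(\cdot+s)$ belongs to $\mathcal{KN}$.
   Context: Setting: $\Omega\subset\mathbb{R}^3$ bounded with smooth boundary, $\nu>0$, $f\in L^2(\Omega)^3$; $H$, $V$ closures of $\{u\in C_0^\infty(\Omega)^3:\mathrm{div}\,u=0\}$ in $L^2(\Omega)^3$, $H^1_0(\Omega)^3$, $((u,v))=\sum_{i,j}\int\partial_iu_j\partial_iv_j$; $P$ Leray projection, $f_\sigma=Pf$, $A=P\Delta$ Stokes operator, $\lambda_1$ first eigenvalue of $-A$; $H_\alpha=D((-A)^\alpha)$ ($H_{1/2}=V$), $H_{-\alpha}=(H_\alpha)^*$ for $\alpha\in[0,1]$; $A_{-1}u(\phi)=\int_\Omega u\cdot A\phi$; $f_{\sigma,-1}:\phi\mapsto\int_\Omega f_\sigma\cdot\phi$. $S_N$ ($N>0$): $S_N(t)u_0=u(t)$ with $u\in C([0,\infty),H)\cap C((0,\infty),H_{3/8})$ the unique solution of $u(t)=e^{\nu A_{-1}t}u_0+\int_0^te^{\nu A_{-1}(t-s)}(G_N(u(s))+f_{\sigma,-1})ds$, where $G_N(u)(\phi)=\int_\Omega F_N(u)\sum_{i,j}u_iu_j\partial_i\phi_j$, $F_N(u)=\min\{1,N/\|u\|_{L^4}\}$. $B_0=\{u\in H:\|u\|_H^2\leqslant1+\|f_{\sigma,-1}\|^2_{H_{-1/2}}/(\lambda_1\nu^2)\}$.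 $\mathcal{A}$ = set of $y\in H$ such that there are $t_j\to\infty$, $\{u_0^j\}\subset B_0$, $N_j\to\infty$ with $S_{N_j}(t_j)u_0^j\to y$ weakly in $H$. $\mathcal{K}$: weak solutions, i.e. $u:[0,\infty)\to H$ with, for each $T>0$, $u\in L^\infty(0,T;H)\cap L^2(0,T;V)$, $du/dt\in L^1(0,T;V^* )$, $\frac{d}{dt}(u,\phi)=-\nu((u,\phi))+\int_\Omega\sum_{i,j}u_iu_j\partial_i\phi_j+\langle f_{\sigma,-1},\phi\rangle$ in $\mathcal{D}'(0,T)$, $\phi\in V$. $\mathcal{KN}$: $u\in\mathcal{K}$ such that either (1) $u(0)\in\mathcal{A}$ and there are $t_j\to\infty$, $\{u_0^j\}\subset B_0$, $N_j\to\infty$ with $S_{N_j}(s_j+t_j)u_0^j\to u(t_0)$ weakly in $H$ for every $t_0\ge0$ and every $[0,\infty)\ni s_j\to t_0$; or (2) $u(0)\in H\setminus\mathcal{A}$ and there is $N_j\to\infty$ with $S_{N_j}(s_j)u(0)\to u(t_0)$ weakly in $H$ for every $t_0\ge0$ and $[0,\infty)\ni s_j\to t_0$. *)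

theory Defs
  imports "HOL-Analysis.Analysis"
begin

type_synonym field3 = "real^3 \<Rightarrow> real^3"

definition tsupp :: "('a::topological_space \<Rightarrow> 'b::zero) \<Rightarrow> 'a set" where
  "tsupp g = closure {x. g x \<noteq> 0}"

definition pd3 :: "3 \<Rightarrow> (real^3 \<Rightarrow> real) \<Rightarrow> real^3 \<Rightarrow> real" where
  "pd3 i g x = deriv (\<lambda>t. g (x + t *\<^sub>R axis i 1)) 0"

fun iter_pd :: "3 list \<Rightarrow> (real^3 \<Rightarrow> real) \<Rightarrow> real^3 \<Rightarrow> real" where
  "iter_pd [] g = g"
| "iter_pd (i # is) g = pd3 i (iter_pd is g)"

text \<open>C-infinity on R^3: all iterated partial derivatives exist and are (Frechet) differentiable.\<close>
definition smooth3 :: "(real^3 \<Rightarrow> real) \<Rightarrow> bool" where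
  "smooth3 g \<longleftrightarrow> (\<forall>is x. iter_pd is g differentiable (at x))"

definition test_scalar :: "(real^3) set \<Rightarrow> (real^3 \<Rightarrow> real) \<Rightarrow> bool" where
  "test_scalar \<Omega> \<psi> \<longleftrightarrow> smooth3 \<psi> \<and> compact (tsupp \<psi>) \<and> tsupp \<psi> \<subseteq> \<Omega>"

definition test_df :: "(real^3) set \<Rightarrow> field3 \<Rightarrow> bool" where
  "test_df \<Omega> \<phi> \<longleftrightarrow> (\<forall>j. test_scalar \<Omega> (\<lambda>x. \<phi> x $ j)) \<and>
     (\<forall>x. (\<Sum>i\<in>UNIV. pd3 i (\<lambda>y. \<phi> y $ i) x) = 0)"

definition smooth_bounded_domain :: "(real^3) set \<Rightarrow> bool" where
  "smooth_bounded_domain \<Omega> \<longleftrightarrow> open \<Omega> \<and> bounded \<Omega> \<and> \<Omega> \<noteq> {} \<and>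
     (\<forall>p\<in>frontier \<Omega>. \<exists>r>0. \<exists>\<rho>. smooth3 \<rho> \<and>
        \<Omega> \<inter> ball p r = {x\<in>ball p r. \<rho> x < 0} \<and>
        (\<forall>x\<in>ball p r. \<rho> x = 0 \<longrightarrow> (\<exists>i. pd3 i \<rho> x \<noteq> 0)))"

definition test_time :: "real \<Rightarrow> (real \<Rightarrow> real) \<Rightarrow> bool" where
  "test_time T \<psi> \<longleftrightarrow> (\<forall>n x. (deriv ^^ n) \<psi> differentiable (at x)) \<and>
     compact (tsupp \<psi>) \<and> tsupp \<psi> \<subseteq> {0<..<T}"

definition L2field :: "(real^3) set \<Rightarrow> field3 \<Rightarrow> bool" where
  "L2field \<Omega> u \<longleftrightarrow> set_borel_measurable lebesgue \<Omega> u \<and>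
     set_integrable lebesgue \<Omega> (\<lambda>x. (norm (u x))^2)"

definition L2s :: "(real^3) set \<Rightarrow> (real^3 \<Rightarrow> real) \<Rightarrow> bool" where
  "L2s \<Omega> h \<longleftrightarrow> set_borel_measurable lebesgue \<Omega> h \<and>
     set_integrable lebesgue \<Omega> (\<lambda>x. (h x)^2)"

definition l2ip :: "(real^3) set \<Rightarrow> field3 \<Rightarrow> field3 \<Rightarrow> real" where
  "l2ip \<Omega> u v = (LINT x:\<Omega>|lebesgue. u x \<bullet> v x)"

definition l2norm :: "(real^3) set \<Rightarrow> field3 \<Rightarrow> real" where
  "l2norm \<Omega> u = sqrt (l2ip \<Omega> u u)"

definition weak_pd :: "(real^3) set \<Rightarrow> 3 \<Rightarrow> (real^3 \<Rightarrow> real) \<Rightarrow> (real^3 \<Rightarrow> real) \<Rightarrow> bool" where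
  "weak_pd \<Omega> i g h \<longleftrightarrow> (\<forall>\<psi>. test_scalar \<Omega> \<psi> \<longrightarrow>
     (LINT x:\<Omega>|lebesgue. g x * pd3 i \<psi> x) = - (LINT x:\<Omega>|lebesgue. h x * \<psi> x))"

definition H1field :: "(real^3) set \<Rightarrow> field3 \<Rightarrow> bool" where
  "H1field \<Omega> u \<longleftrightarrow> L2field \<Omega> u \<and> (\<forall>i j. \<exists>h. L2s \<Omega> h \<and> weak_pd \<Omega> i (\<lambda>x. u x $ j) h)"

definition wgrad :: "(real^3) set \<Rightarrow> field3 \<Rightarrow> 3 \<Rightarrow> 3 \<Rightarrow> real^3 \<Rightarrow> real" where
  "wgrad \<Omega> u i j = (SOME h. L2s \<Omega> h \<and> weak_pd \<Omega> i (\<lambda>x. u x $ j) h)"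

definition dir :: "(real^3) set \<Rightarrow> field3 \<Rightarrow> field3 \<Rightarrow> real" where
  "dir \<Omega> u v = (\<Sum>i\<in>UNIV. \<Sum>j\<in>UNIV. LINT x:\<Omega>|lebesgue. wgrad \<Omega> u i j x * wgrad \<Omega> v i j x)"

definition Hsp :: "(real^3) set \<Rightarrow> field3 set" where
  "Hsp \<Omega> = {u. L2field \<Omega> u \<and> (\<exists>\<phi>. (\<forall>n. test_df \<Omega> (\<phi> n)) \<and>
      (\<lambda>n. l2norm \<Omega> (\<lambda>x. u x - \<phi> n x)) \<longlonglongrightarrow> 0)}"

definition Vsp :: "(real^3) set \<Rightarrow> field3 set" where
  "Vsp \<Omega> = {u. H1field \<Omega> u \<and> (\<exists>\<phi>. (\<forall>n. test_df \<Omega> (\<phi> n)) \<and>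
      (\<lambda>n. l2norm \<Omega> (\<lambda>x. u x - \<phi> n x)
            + sqrt (dir \<Omega> (\<lambda>x. u x - \<phi> n x) (\<lambda>x. u x - \<phi> n x))) \<longlonglongrightarrow> 0)}"

definition leray :: "(real^3) set \<Rightarrow> field3 \<Rightarrow> field3" where
  "leray \<Omega> f = (SOME g. g \<in> Hsp \<Omega> \<and> (\<forall>h\<in>Hsp \<Omega>. l2ip \<Omega> (\<lambda>x. f x - g x) h = 0))"

text \<open>-A w = lam w, with A the Stokes operator (operator of the form ((.,.)) on V).\<close>
definition stokes_eig :: "(real^3) set \<Rightarrow> field3 \<Rightarrow> real \<Rightarrow> bool" where
  "stokes_eig \<Omega> w lam \<longleftrightarrow> w \<in> Vsp \<Omega> \<and> l2norm \<Omega> w \<noteq> 0 \<and>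
     (\<forall>\<phi>\<in>Vsp \<Omega>. dir \<Omega> w \<phi> = lam * l2ip \<Omega> w \<phi>)"

definition lambda1 :: "(real^3) set \<Rightarrow> real" where
  "lambda1 \<Omega> = Inf {lam. \<exists>w. stokes_eig \<Omega> w lam}"

definition stokes_basis :: "(real^3) set \<Rightarrow> (nat \<Rightarrow> field3) \<Rightarrow> (nat \<Rightarrow> real) \<Rightarrow> bool" where
  "stokes_basis \<Omega> w lam \<longleftrightarrow> (\<forall>k. stokes_eig \<Omega> (w k) (lam k)) \<and>
     (\<forall>k l. l2ip \<Omega> (w k) (w l) = (if k = l then 1 else 0)) \<and>
     (\<forall>u\<in>Hsp \<Omega>. (\<lambda>k. (l2ip \<Omega> u (w k))^2) sums ((l2norm \<Omega> u)^2))"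

definition some_basis :: "(real^3) set \<Rightarrow> (nat \<Rightarrow> field3) \<times> (nat \<Rightarrow> real)" where
  "some_basis \<Omega> = (SOME p. stokes_basis \<Omega> (fst p) (snd p))"

text \<open>H_alpha = D((-A)^alpha) and its norm, via the eigen-expansion.\<close>
definition Halpha :: "(real^3) set \<Rightarrow> real \<Rightarrow> field3 set" where
  "Halpha \<Omega> \<alpha> = {u \<in> Hsp \<Omega>. summable (\<lambda>k. snd (some_basis \<Omega>) k powr (2*\<alpha>)
        * (l2ip \<Omega> u (fst (some_basis \<Omega>) k))^2)}"

definition Halpha_norm :: "(real^3) set \<Rightarrow> real \<Rightarrow> field3 \<Rightarrow> real" where
  "Halpha_norm \<Omega> \<alpha> u = sqrt (\<Sum>k. snd (some_basis \<Omega>) k powr (2*\<alpha>)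
        * (l2ip \<Omega> u (fst (some_basis \<Omega>) k))^2)"

text \<open>f_{sigma,-1} in H_{-1/2} = (H_{1/2})^*, H_{1/2}-norm of phi = sqrt((phi,phi)).\<close>
definition fsig_bounded :: "(real^3) set \<Rightarrow> field3 \<Rightarrow> bool" where
  "fsig_bounded \<Omega> f \<longleftrightarrow> bdd_above {\<bar>l2ip \<Omega> (leray \<Omega> f) \<phi>\<bar> | \<phi>. \<phi> \<in> Vsp \<Omega> \<and> dir \<Omega> \<phi> \<phi> \<le> 1}"

definition fsig_norm :: "(real^3) set \<Rightarrow> field3 \<Rightarrow> real" where
  "fsig_norm \<Omega> f = Sup {\<bar>l2ip \<Omega> (leray \<Omega> f) \<phi>\<bar> | \<phi>. \<phi> \<in> Vsp \<Omega> \<and> dir \<Omega> \<phi> \<phi> \<le> 1}"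

definition l4norm :: "(real^3) set \<Rightarrow> field3 \<Rightarrow> real" where
  "l4norm \<Omega> u = (LINT x:\<Omega>|lebesgue. (norm (u x))^4) powr (1/4)"

definition FN :: "(real^3) set \<Rightarrow> real \<Rightarrow> field3 \<Rightarrow> real" where
  "FN \<Omega> N u = (if l4norm \<Omega> u = 0 then 1 else min 1 (N / l4norm \<Omega> u))"

definition bform :: "(real^3) set \<Rightarrow> field3 \<Rightarrow> field3 \<Rightarrow> real" where
  "bform \<Omega> u \<phi> = (\<Sum>i\<in>UNIV. \<Sum>j\<in>UNIV. LINT x:\<Omega>|lebesgue. u x $ i * u x $ j * wgrad \<Omega> \<phi> i j x)"

definition GN :: "(real^3) set \<Rightarrow> real \<Rightarrow> field3 \<Rightarrow> field3 \<Rightarrow> real" where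
  "GN \<Omega> N u \<phi> = FN \<Omega> N u * bform \<Omega> u \<phi>"

text \<open>u is the solution t |-> S_N(t) u0 of the mild equation, in the class
  C([0,oo),H) \<inter> C((0,oo),H_{3/8}); the H_{-1}-valued mild equation is expressed by
  testing it against every eigenfunction w of -A (eigenvalue lam), on which
  e^{nu A_{-1} t} acts as multiplication by exp(-nu lam t).\<close>
definition mild_sol :: "(real^3) set \<Rightarrow> real \<Rightarrow> field3 \<Rightarrow> real \<Rightarrow> field3 \<Rightarrow> (real \<Rightarrow> field3) \<Rightarrow> bool" where
  "mild_sol \<Omega> \<nu> f N u0 u \<longleftrightarrow> u0 \<in> Hsp \<Omega> \<and>
     (\<forall>t\<ge>0. u t \<in> Hsp \<Omega>) \<and> l2norm \<Omega> (\<lambda>x. u 0 x - u0 x) = 0 \<and>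
     (\<forall>t\<ge>0. ((\<lambda>s. l2norm \<Omega> (\<lambda>x. u s x - u t x)) \<longlongrightarrow> 0) (at t within {0..})) \<and>
     (\<forall>t>0. u t \<in> Halpha \<Omega> (3/8)) \<and>
     (\<forall>t>0. ((\<lambda>s. Halpha_norm \<Omega> (3/8) (\<lambda>x. u s x - u t x)) \<longlongrightarrow> 0) (at t within {0<..})) \<and>
     (\<forall>w lam. stokes_eig \<Omega> w lam \<longrightarrow> (\<forall>t\<ge>0.
        set_integrable lborel {0..t}
          (\<lambda>s. exp (-\<nu>*lam*(t-s)) * (GN \<Omega> N (u s) w + l2ip \<Omega> (leray \<Omega> f) w)) \<and>
        l2ip \<Omega> (u t) w = exp (-\<nu>*lam*t) * l2ip \<Omega> u0 w
          + (LINT s:{0..t}|lborel. exp (-\<nu>*lam*(t-s)) * (GN \<Omega> N (u s) w + l2ip \<Omega> (leray \<Omega> f) w))))"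

definition wconv :: "(real^3) set \<Rightarrow> (nat \<Rightarrow> field3) \<Rightarrow> field3 \<Rightarrow> bool" where
  "wconv \<Omega> x y \<longleftrightarrow> y \<in> Hsp \<Omega> \<and> (\<forall>h\<in>Hsp \<Omega>. (\<lambda>j. l2ip \<Omega> (x j) h) \<longlonglongrightarrow> l2ip \<Omega> y h)"

definition B0 :: "(real^3) set \<Rightarrow> real \<Rightarrow> field3 \<Rightarrow> field3 set" where
  "B0 \<Omega> \<nu> f = {u \<in> Hsp \<Omega>. (l2norm \<Omega> u)^2 \<le> 1 + (fsig_norm \<Omega> f)^2 / (lambda1 \<Omega> * \<nu>^2)}"

definition attractor :: "(real^3) set \<Rightarrow> real \<Rightarrow> field3 \<Rightarrow> field3 set" where
  "attractor \<Omega> \<nu> f = {y \<in> Hsp \<Omega>. \<exists>(t::nat \<Rightarrow> real) (u0::nat \<Rightarrow> field3) (Ns::nat \<Rightarrow> real)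
      (S::nat \<Rightarrow> real \<Rightarrow> field3).
      (\<forall>j. t j \<ge> 0) \<and> filterlim t at_top sequentially \<and>
      (\<forall>j. u0 j \<in> B0 \<Omega> \<nu> f) \<and> (\<forall>j. Ns j > 0) \<and> filterlim Ns at_top sequentially \<and>
      (\<forall>j. mild_sol \<Omega> \<nu> f (Ns j) (u0 j) (S j)) \<and>
      wconv \<Omega> (\<lambda>j. S j (t j)) y}"

definition Vdual_norm :: "(real^3) set \<Rightarrow> (field3 \<Rightarrow> real) \<Rightarrow> real" where
  "Vdual_norm \<Omega> g = Sup {\<bar>g \<phi>\<bar> | \<phi>. \<phi> \<in> Vsp \<Omega> \<and> dir \<Omega> \<phi> \<phi> \<le> 1}"

definition weak_sols :: "(real^3) set \<Rightarrow> real \<Rightarrow> field3 \<Rightarrow> (real \<Rightarrow> field3) set" where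
  "weak_sols \<Omega> \<nu> f = {u. \<forall>T>0.
     \<comment> \<open>u in L^infinity(0,T;H)\<close>
     (\<forall>t\<in>{0..T}. u t \<in> Hsp \<Omega>) \<and>
     (\<forall>h\<in>Hsp \<Omega>. (\<lambda>t. l2ip \<Omega> (u t) h) \<in> borel_measurable (lebesgue_on {0..T})) \<and>
     (\<exists>C. AE t in lebesgue_on {0..T}. l2norm \<Omega> (u t) \<le> C) \<and>
     \<comment> \<open>u in L^2(0,T;V)\<close>
     (AE t in lebesgue_on {0..T}. u t \<in> Vsp \<Omega>) \<and>
     (\<forall>\<phi>\<in>Vsp \<Omega>. (\<lambda>t. dir \<Omega> (u t) \<phi>) \<in> borel_measurable (lebesgue_on {0..T})) \<and>
     integrable (lebesgue_on {0..T}) (\<lambda>t. dir \<Omega> (u t) (u t)) \<and>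
     \<comment> \<open>du/dt in L^1(0,T;V^*) (distributional derivative)\<close>
     (\<exists>g::real \<Rightarrow> field3 \<Rightarrow> real.
        (\<forall>t a b \<phi>1 \<phi>2. \<phi>1 \<in> Vsp \<Omega> \<longrightarrow> \<phi>2 \<in> Vsp \<Omega> \<longrightarrow>
            g t (\<lambda>x. a *\<^sub>R \<phi>1 x + b *\<^sub>R \<phi>2 x) = a * g t \<phi>1 + b * g t \<phi>2) \<and>
        (\<forall>t. bdd_above {\<bar>g t \<phi>\<bar> | \<phi>. \<phi> \<in> Vsp \<Omega> \<and> dir \<Omega> \<phi> \<phi> \<le> 1}) \<and>
        (\<forall>\<phi>\<in>Vsp \<Omega>. (\<lambda>t. g t \<phi>) \<in> borel_measurable (lebesgue_on {0..T})) \<and>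
        integrable (lebesgue_on {0..T}) (\<lambda>t. Vdual_norm \<Omega> (g t)) \<and>
        (\<forall>\<phi>\<in>Vsp \<Omega>. \<forall>\<psi>. test_time T \<psi> \<longrightarrow>
            (\<integral>t. l2ip \<Omega> (u t) \<phi> * deriv \<psi> t \<partial>lebesgue_on {0..T})
              = - (\<integral>t. g t \<phi> * \<psi> t \<partial>lebesgue_on {0..T}))) \<and>
     \<comment> \<open>the weak Navier-Stokes equation in D'(0,T)\<close>
     (\<forall>\<phi>\<in>Vsp \<Omega>. \<forall>\<psi>. test_time T \<psi> \<longrightarrow>
        integrable (lebesgue_on {0..T})
          (\<lambda>t. (- \<nu> * dir \<Omega> (u t) \<phi> + bform \<Omega> (u t) \<phi> + l2ip \<Omega> (leray \<Omega> f) \<phi>) * \<psi> t) \<and>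
        - (\<integral>t. l2ip \<Omega> (u t) \<phi> * deriv \<psi> t \<partial>lebesgue_on {0..T})
          = (\<integral>t. (- \<nu> * dir \<Omega> (u t) \<phi> + bform \<Omega> (u t) \<phi> + l2ip \<Omega> (leray \<Omega> f) \<phi>) * \<psi> t
               \<partial>lebesgue_on {0..T}))}"

definition KN :: "(real^3) set \<Rightarrow> real \<Rightarrow> field3 \<Rightarrow> (real \<Rightarrow> field3) set" where
  "KN \<Omega> \<nu> f = {u \<in> weak_sols \<Omega> \<nu> f.
     (u 0 \<in> attractor \<Omega> \<nu> f \<and>
       (\<exists>(t::nat \<Rightarrow> real) (u0::nat \<Rightarrow> field3) (Ns::nat \<Rightarrow> real) (S::nat \<Rightarrow> real \<Rightarrow> field3).
         (\<forall>j. t j \<ge> 0) \<and> filterlim t at_top sequentially \<and>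
         (\<forall>j. u0 j \<in> B0 \<Omega> \<nu> f) \<and> (\<forall>j. Ns j > 0) \<and> filterlim Ns at_top sequentially \<and>
         (\<forall>j. mild_sol \<Omega> \<nu> f (Ns j) (u0 j) (S j)) \<and>
         (\<forall>t0\<ge>0. \<forall>s::nat \<Rightarrow> real. (\<forall>j. s j \<ge> 0) \<and> s \<longlonglongrightarrow> t0 \<longrightarrow>
            wconv \<Omega> (\<lambda>j. S j (s j + t j)) (u t0))))
   \<or> (u 0 \<in> Hsp \<Omega> - attractor \<Omega> \<nu> f \<and>
       (\<exists>(Ns::nat \<Rightarrow> real) (S::nat \<Rightarrow> real \<Rightarrow> field3).
         (\<forall>j. Ns j > 0) \<and> filterlim Ns at_top sequentially \<and>
         (\<forall>j. mild_sol \<Omega> \<nu> f (Ns j) (u 0) (S j)) \<and>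
         (\<forall>t0\<ge>0. \<forall>s::nat \<Rightarrow> real. (\<forall>j. s j \<ge> 0) \<and> s \<longlonglongrightarrow> t0 \<longrightarrow>
            wconv \<Omega> (\<lambda>j. S j (s j)) (u t0))))}"

end

theory Submission
  imports Defs
begin

text \<open>
  Each clause in the definition of a weak solution is a measurability, integrability or
  almost-everywhere statement on \<open>[0,T]\<close>, or an identity between integrals over \<open>[0,T]\<close> against
  test functions. Translating time by \<open>s \<ge> 0\<close> transports each clause from \<open>[0,T+s]\<close> to \<open>[0,T]\<close>:
  Lebesgue measure is translation invariant, and a test function \<open>\<psi>\<close> on \<open>(0,T)\<close> becomes the
  test function \<open>\<psi>(\<cdot> - s)\<close> on \<open>(0,T+s)\<close>, which vanishes on \<open>[0,s]\<close>.
  The trajectories \<open>S\<^sub>N\<^sub>j(\<cdot>) u\<^sub>0\<^sup>j\<close> that approximate \<open>u\<close> along the times \<open>t\<^sub>j\<close> approximate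
  \<open>u(\<cdot> + s)\<close> along the times \<open>t\<^sub>j + s\<close>; in particular \<open>u(s)\<close> is a weak limit of
  \<open>S\<^sub>N\<^sub>j(t\<^sub>j + s) u\<^sub>0\<^sup>j\<close>, hence lies in the attractor.
\<close>

lemma sets_lebesgue_Icc [simp]: "{a..b::real} \<in> sets lebesgue"
  using lmeasurable_cbox[of a b] by (simp add: fmeasurableD)

lemma lebesgue_measurable_translation_real: "(\<lambda>x::real. x + c) \<in> lebesgue \<rightarrow>\<^sub>M lebesgue"
  using lebesgue_affine_measurable[where c="\<lambda>_::real. 1" and t=c] by (simp add: add.commute)

lemma distr_lebesgue_translation_real: "distr lebesgue lebesgue (\<lambda>x::real. x + c) = lebesgue"
  using lebesgue_real_affine[of 1 c] by (simp add: density_1 add.commute)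

lemma AE_lebesgue_translation_real:
  "(AE x in lebesgue. P x) \<Longrightarrow> AE x in lebesgue. P (x + c::real)"
  by (rule AE_distrD[OF lebesgue_measurable_translation_real]) (simp only: distr_lebesgue_translation_real)

lemma has_bochner_integral_translate_real:
  fixes f :: "real \<Rightarrow> 'a::euclidean_space"
  shows "has_bochner_integral (lebesgue_on {a - c..b - c}) (\<lambda>x. f (x + c)) i
     \<longleftrightarrow> has_bochner_integral (lebesgue_on {a..b}) f i"
proof -
  have "(\<lambda>x. indicator {a..b} (c + 1 * x) *\<^sub>R f (c + 1 * x)) = (\<lambda>x. indicator {a - c..b - c} x *\<^sub>R f (x + c))"
    by (auto simp: indicator_def fun_eq_iff add.commute)
  then show ?thesis
    using has_bochner_integral_lebesgue_real_affine_iff[of 1 "\<lambda>x. indicator {a..b} x *\<^sub>R f x" i c]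
    by (simp add: has_bochner_integral_restrict_space)
qed

lemma integrable_translate_real:
  fixes f :: "real \<Rightarrow> 'a::euclidean_space"
  shows "integrable (lebesgue_on {a - c..b - c}) (\<lambda>x. f (x + c)) \<longleftrightarrow> integrable (lebesgue_on {a..b}) f"
  by (simp add: integrable.simps has_bochner_integral_translate_real)

lemma integral_translate_real:
  fixes f :: "real \<Rightarrow> 'a::euclidean_space"
  shows "integral\<^sup>L (lebesgue_on {a - c..b - c}) (\<lambda>x. f (x + c)) = integral\<^sup>L (lebesgue_on {a..b}) f"
proof (cases "integrable (lebesgue_on {a..b}) f")
  case True
  then show ?thesis
    by (intro has_bochner_integral_integral_eq)
       (simp add: has_bochner_integral_translate_real has_bochner_integral_integrable)
next
  case False
  then show ?thesis
    by (simp add: integrable_translate_real not_integrable_integral_eq)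
qed

lemma borel_measurable_translate_real:
  fixes f :: "real \<Rightarrow> 'a::real_normed_vector"
  assumes "f \<in> borel_measurable (lebesgue_on {a..b})"
  shows "(\<lambda>x. f (x + c)) \<in> borel_measurable (lebesgue_on {a - c..b - c})"
proof -
  have "(\<lambda>x. indicator {a..b} x *\<^sub>R f x) \<in> borel_measurable lebesgue"
    using assms by (simp add: borel_measurable_restrict_space_iff)
  from measurable_compose[OF lebesgue_measurable_translation_real this, of c]
  show ?thesis
    by (simp add: borel_measurable_restrict_space_iff indicator_def algebra_simps)
qed

lemma AE_translate_real:
  fixes a b c :: real
  assumes "AE x in lebesgue_on {a..b}. P x"
  shows "AE x in lebesgue_on {a - c..b - c}. P (x + c)"
proof -
  have "AE x in lebesgue. x \<in> {a..b} \<longrightarrow> P x"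
    using assms by (subst (asm) AE_restrict_space_iff) auto
  from AE_lebesgue_translation_real[OF this, of c] show ?thesis
    by (subst AE_restrict_space_iff) (auto simp: algebra_simps)
qed

lemma AE_lebesgue_on_subset:
  assumes "AE x in lebesgue_on A. P x" "B \<subseteq> A" "A \<in> sets lebesgue" "B \<in> sets lebesgue"
  shows "AE x in lebesgue_on B. P x"
  using assms by (auto simp: AE_restrict_space_iff elim!: eventually_mono)

lemma integral_lebesgue_on_vanishing:
  fixes f :: "real \<Rightarrow> 'a::euclidean_space"
  assumes "\<And>t. t \<in> {a..<c} \<Longrightarrow> f t = 0" "a \<le> c"
  shows "integral\<^sup>L (lebesgue_on {c..b}) f = integral\<^sup>L (lebesgue_on {a..b}) f"
proof -
  have "(\<lambda>t. indicator {c..b} t *\<^sub>R f t) = (\<lambda>t. indicator {a..b} t *\<^sub>R f t)"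
    using assms by (force simp: indicator_def fun_eq_iff)
  then show ?thesis by (simp add: integral_restrict_space)
qed

lemma borel_measurable_delay:
  fixes f :: "real \<Rightarrow> 'a::real_normed_vector"
  assumes "f \<in> borel_measurable (lebesgue_on {a..b + s})" "0 \<le> s"
  shows "(\<lambda>t. f (t + s)) \<in> borel_measurable (lebesgue_on {a..b})"
proof -
  have "(\<lambda>t. f (t + s)) \<in> borel_measurable (lebesgue_on {a - s..b})"
    using borel_measurable_translate_real[OF assms(1), of s] by simp
  then show ?thesis
    by (rule measurable_restrict_mono) (use assms(2) in auto)
qed

lemma AE_delay:
  fixes a b s :: real
  assumes "AE t in lebesgue_on {a..b + s}. P t" "0 \<le> s"
  shows "AE t in lebesgue_on {a..b}. P (t + s)"
proof -
  have "AE t in lebesgue_on {a - s..b}. P (t + s)"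
    using AE_translate_real[OF assms(1), of s] unfolding add_diff_cancel_right' .
  then show ?thesis
    by (rule AE_lebesgue_on_subset) (use assms(2) in auto)
qed

lemma integrable_delay:
  fixes f :: "real \<Rightarrow> 'a::euclidean_space"
  assumes "integrable (lebesgue_on {a..b + s}) f" "0 \<le> s"
  shows "integrable (lebesgue_on {a..b}) (\<lambda>t. f (t + s))"
proof -
  have "integrable (lebesgue_on {a - s..b}) (\<lambda>t. f (t + s))"
    using assms(1) integrable_translate_real[where a=a and b="b + s" and c=s and f=f] by simp
  then show ?thesis
    by (rule integrable_subinterval) (use assms(2) in auto)
qed

lemma integral_delay:
  fixes f :: "real \<Rightarrow> 'a::euclidean_space"
  assumes "\<And>t. t \<in> {a..<a + s} \<Longrightarrow> f t = 0" "0 \<le> s"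
  shows "integral\<^sup>L (lebesgue_on {a..b}) (\<lambda>t. f (t + s)) = integral\<^sup>L (lebesgue_on {a..b + s}) f"
proof -
  have "integral\<^sup>L (lebesgue_on {a..b}) (\<lambda>t. f (t + s))
      = integral\<^sup>L (lebesgue_on {a - s..b}) (\<lambda>t. f (t + s))"
    using assms by (intro integral_lebesgue_on_vanishing) auto
  also have "\<dots> = integral\<^sup>L (lebesgue_on {a..b + s}) f"
    using integral_translate_real[where a=a and b="b + s" and c=s] by simp
  finally show ?thesis .
qed

lemma deriv_translate:
  fixes g :: "'a::real_normed_field \<Rightarrow> 'a"
  shows "deriv (\<lambda>t. g (t + c)) x = deriv g (x + c)"
  by (simp add: deriv_def DERIV_shift)

lemma funpow_deriv_translate:
  fixes g :: "'a::real_normed_field \<Rightarrow> 'a"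
  shows "(deriv ^^ n) (\<lambda>t. g (t + c)) = (\<lambda>t. (deriv ^^ n) g (t + c))"
  by (induction n) (simp_all add: deriv_translate)

lemma tsupp_translate:
  fixes g :: "'a::real_normed_vector \<Rightarrow> 'b::zero"
  shows "tsupp (\<lambda>x. g (x - c)) = (+) c ` tsupp g"
proof -
  have "{x. g (x - c) \<noteq> 0} = (+) c ` {x. g x \<noteq> 0}"
    by (auto simp: image_iff) (metis add_diff_cancel_left' diff_add_cancel add.commute)
  then show ?thesis
    by (simp add: tsupp_def closure_translation)
qed

lemma not_in_tsupp_eq_0: "x \<notin> tsupp g \<Longrightarrow> g x = 0"
  using closure_subset by (force simp: tsupp_def)

lemma deriv_eq_0_outside_tsupp:
  fixes g :: "'a::real_normed_field \<Rightarrow> 'a"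
  assumes "x \<notin> tsupp g"
  shows "deriv g x = 0"
proof -
  have "open (- tsupp g)"
    by (simp add: tsupp_def open_Compl)
  then have "eventually (\<lambda>y. g y = 0) (nhds x)"
    using assms not_in_tsupp_eq_0 by (auto simp: eventually_nhds)
  then have "deriv g x = deriv (\<lambda>_. 0) x"
    by (rule deriv_cong_ev) simp
  then show ?thesis by simp
qed

lemma test_time_delay:
  assumes "test_time T \<psi>" "0 \<le> s"
  shows "test_time (T + s) (\<lambda>t. \<psi> (t - s))"
  unfolding test_time_def
proof (intro conjI allI)
  fix n x
  have "(deriv ^^ n) \<psi> differentiable at (x - s)"
    using assms(1) by (simp add: test_time_def)
  then have "(\<lambda>t. (deriv ^^ n) \<psi> (t - s)) differentiable at x"
    using differentiable_chain_at[of "\<lambda>t. t - s" x "(deriv ^^ n) \<psi>"] by (simp add: o_def)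
  then show "(deriv ^^ n) (\<lambda>t. \<psi> (t - s)) differentiable at x"
    using funpow_deriv_translate[of n \<psi> "- s"] by simp
next
  show "compact (tsupp (\<lambda>t. \<psi> (t - s)))"
    using assms(1) by (simp add: test_time_def tsupp_translate compact_translation)
  show "tsupp (\<lambda>t. \<psi> (t - s)) \<subseteq> {0<..<T + s}"
    using assms by (auto simp: test_time_def tsupp_translate)
qed

lemma test_time_delay_vanishes:
  assumes "test_time T \<psi>" "t \<le> s"
  shows "\<psi> (t - s) = 0" "deriv (\<lambda>t. \<psi> (t - s)) t = 0"
proof -
  have "t - s \<notin> tsupp \<psi>"
    using assms by (auto simp: test_time_def)
  then show "\<psi> (t - s) = 0" "deriv (\<lambda>t. \<psi> (t - s)) t = 0"
    using deriv_translate[of \<psi> "- s"] by (simp_all add: not_in_tsupp_eq_0 deriv_eq_0_outside_tsupp)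
qed

lemma integral_test_time_delay:
  fixes F :: "real \<Rightarrow> real"
  assumes "test_time T \<psi>" "0 \<le> s"
  shows "(\<integral>t. F t * \<psi> (t - s) \<partial>lebesgue_on {0..T + s}) = (\<integral>t. F (t + s) * \<psi> t \<partial>lebesgue_on {0..T})"
    and "(\<integral>t. F t * deriv (\<lambda>t. \<psi> (t - s)) t \<partial>lebesgue_on {0..T + s})
       = (\<integral>t. F (t + s) * deriv \<psi> t \<partial>lebesgue_on {0..T})"
  using integral_delay[of 0 s "\<lambda>t. F t * \<psi> (t - s)" T]
    integral_delay[of 0 s "\<lambda>t. F t * deriv (\<lambda>t. \<psi> (t - s)) t" T]
    test_time_delay_vanishes[OF assms(1)] deriv_translate[of \<psi> "- s"] assms(2)
  by auto

definition weak_time_derivative :: "real \<Rightarrow> (real \<Rightarrow> real) \<Rightarrow> (real \<Rightarrow> real) \<Rightarrow> bool" where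
  "weak_time_derivative T a b \<longleftrightarrow> (\<forall>\<psi>. test_time T \<psi> \<longrightarrow>
     (\<integral>t. a t * deriv \<psi> t \<partial>lebesgue_on {0..T}) = - (\<integral>t. b t * \<psi> t \<partial>lebesgue_on {0..T}))"

lemma weak_time_derivative_iff:
  "weak_time_derivative T a b \<longleftrightarrow> (\<forall>\<psi>. test_time T \<psi> \<longrightarrow>
     - (\<integral>t. a t * deriv \<psi> t \<partial>lebesgue_on {0..T}) = (\<integral>t. b t * \<psi> t \<partial>lebesgue_on {0..T}))"
  unfolding weak_time_derivative_def by (auto simp: minus_equation_iff eq_commute[of _ "- _"])

lemma weak_time_derivative_delay:
  assumes "weak_time_derivative (T + s) a b" "0 \<le> s"
  shows "weak_time_derivative T (\<lambda>t. a (t + s)) (\<lambda>t. b (t + s))"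
  unfolding weak_time_derivative_def
proof (intro allI impI)
  fix \<psi> assume \<psi>: "test_time T \<psi>"
  have "(\<integral>t. a t * deriv (\<lambda>t. \<psi> (t - s)) t \<partial>lebesgue_on {0..T + s})
      = - (\<integral>t. b t * \<psi> (t - s) \<partial>lebesgue_on {0..T + s})"
    using assms(1) test_time_delay[OF \<psi> assms(2)] unfolding weak_time_derivative_def by blast
  then show "(\<integral>t. a (t + s) * deriv \<psi> t \<partial>lebesgue_on {0..T})
      = - (\<integral>t. b (t + s) * \<psi> t \<partial>lebesgue_on {0..T})"
    by (simp add: integral_test_time_delay[OF \<psi> assms(2)])
qed

definition in_Linf_H :: "(real^3) set \<Rightarrow> real \<Rightarrow> (real \<Rightarrow> field3) \<Rightarrow> bool" where
  "in_Linf_H \<Omega> T u \<longleftrightarrow> (\<forall>t\<in>{0..T}. u t \<in> Hsp \<Omega>) \<and>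
     (\<forall>h\<in>Hsp \<Omega>. (\<lambda>t. l2ip \<Omega> (u t) h) \<in> borel_measurable (lebesgue_on {0..T})) \<and>
     (\<exists>C. AE t in lebesgue_on {0..T}. l2norm \<Omega> (u t) \<le> C)"

definition in_L2_V :: "(real^3) set \<Rightarrow> real \<Rightarrow> (real \<Rightarrow> field3) \<Rightarrow> bool" where
  "in_L2_V \<Omega> T u \<longleftrightarrow> (AE t in lebesgue_on {0..T}. u t \<in> Vsp \<Omega>) \<and>
     (\<forall>\<phi>\<in>Vsp \<Omega>. (\<lambda>t. dir \<Omega> (u t) \<phi>) \<in> borel_measurable (lebesgue_on {0..T})) \<and>
     integrable (lebesgue_on {0..T}) (\<lambda>t. dir \<Omega> (u t) (u t))"

definition has_L1_Vdual_derivative :: "(real^3) set \<Rightarrow> real \<Rightarrow> (real \<Rightarrow> field3) \<Rightarrow> bool" where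
  "has_L1_Vdual_derivative \<Omega> T u \<longleftrightarrow> (\<exists>g::real \<Rightarrow> field3 \<Rightarrow> real.
     (\<forall>t a b \<phi>1 \<phi>2. \<phi>1 \<in> Vsp \<Omega> \<longrightarrow> \<phi>2 \<in> Vsp \<Omega> \<longrightarrow>
        g t (\<lambda>x. a *\<^sub>R \<phi>1 x + b *\<^sub>R \<phi>2 x) = a * g t \<phi>1 + b * g t \<phi>2) \<and>
     (\<forall>t. bdd_above {\<bar>g t \<phi>\<bar> | \<phi>. \<phi> \<in> Vsp \<Omega> \<and> dir \<Omega> \<phi> \<phi> \<le> 1}) \<and>
     (\<forall>\<phi>\<in>Vsp \<Omega>. (\<lambda>t. g t \<phi>) \<in> borel_measurable (lebesgue_on {0..T})) \<and>
     integrable (lebesgue_on {0..T}) (\<lambda>t. Vdual_norm \<Omega> (g t)) \<and>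
     (\<forall>\<phi>\<in>Vsp \<Omega>. \<forall>\<psi>. test_time T \<psi> \<longrightarrow>
        (\<integral>t. l2ip \<Omega> (u t) \<phi> * deriv \<psi> t \<partial>lebesgue_on {0..T})
          = - (\<integral>t. g t \<phi> * \<psi> t \<partial>lebesgue_on {0..T})))"

definition weak_NSE_on :: "(real^3) set \<Rightarrow> real \<Rightarrow> field3 \<Rightarrow> real \<Rightarrow> (real \<Rightarrow> field3) \<Rightarrow> bool" where
  "weak_NSE_on \<Omega> \<nu> f T u \<longleftrightarrow> (\<forall>\<phi>\<in>Vsp \<Omega>. \<forall>\<psi>. test_time T \<psi> \<longrightarrow>
     integrable (lebesgue_on {0..T})
       (\<lambda>t. (- \<nu> * dir \<Omega> (u t) \<phi> + bform \<Omega> (u t) \<phi> + l2ip \<Omega> (leray \<Omega> f) \<phi>) * \<psi> t) \<and>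
     - (\<integral>t. l2ip \<Omega> (u t) \<phi> * deriv \<psi> t \<partial>lebesgue_on {0..T})
       = (\<integral>t. (- \<nu> * dir \<Omega> (u t) \<phi> + bform \<Omega> (u t) \<phi> + l2ip \<Omega> (leray \<Omega> f) \<phi>) * \<psi> t
            \<partial>lebesgue_on {0..T}))"

lemma weak_sols_iff:
  "u \<in> weak_sols \<Omega> \<nu> f \<longleftrightarrow> (\<forall>T>0. in_Linf_H \<Omega> T u \<and> in_L2_V \<Omega> T u \<and>
     has_L1_Vdual_derivative \<Omega> T u \<and> weak_NSE_on \<Omega> \<nu> f T u)"
  unfolding weak_sols_def in_Linf_H_def in_L2_V_def has_L1_Vdual_derivative_def weak_NSE_on_def
  by (simp add: conj_assoc)

lemma in_Linf_H_delay:
  assumes "in_Linf_H \<Omega> (T + s) u" "0 \<le> s"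
  shows "in_Linf_H \<Omega> T (\<lambda>t. u (t + s))"
proof -
  from assms(1) obtain C where
    H: "\<forall>t\<in>{0..T + s}. u t \<in> Hsp \<Omega>" and
    measurable: "\<forall>h\<in>Hsp \<Omega>. (\<lambda>t. l2ip \<Omega> (u t) h) \<in> borel_measurable (lebesgue_on {0..T + s})" and
    bounded: "AE t in lebesgue_on {0..T + s}. l2norm \<Omega> (u t) \<le> C"
    unfolding in_Linf_H_def by blast
  have "\<forall>h\<in>Hsp \<Omega>. (\<lambda>t. l2ip \<Omega> (u (t + s)) h) \<in> borel_measurable (lebesgue_on {0..T})"
    using measurable by (auto intro!: borel_measurable_delay[OF _ assms(2)])
  with H AE_delay[OF bounded assms(2)] assms(2) show ?thesis
    unfolding in_Linf_H_def by auto
qed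

lemma in_L2_V_delay:
  assumes "in_L2_V \<Omega> (T + s) u" "0 \<le> s"
  shows "in_L2_V \<Omega> T (\<lambda>t. u (t + s))"
proof -
  from assms(1) have
    V: "AE t in lebesgue_on {0..T + s}. u t \<in> Vsp \<Omega>" and
    measurable: "\<forall>\<phi>\<in>Vsp \<Omega>. (\<lambda>t. dir \<Omega> (u t) \<phi>) \<in> borel_measurable (lebesgue_on {0..T + s})" and
    integrable: "integrable (lebesgue_on {0..T + s}) (\<lambda>t. dir \<Omega> (u t) (u t))"
    unfolding in_L2_V_def by blast+
  have "\<forall>\<phi>\<in>Vsp \<Omega>. (\<lambda>t. dir \<Omega> (u (t + s)) \<phi>) \<in> borel_measurable (lebesgue_on {0..T})"
    using measurable by (auto intro!: borel_measurable_delay[OF _ assms(2)])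
  with AE_delay[OF V assms(2)] integrable_delay[OF integrable assms(2)] show ?thesis
    unfolding in_L2_V_def by blast
qed

lemma has_L1_Vdual_derivative_delay:
  assumes "has_L1_Vdual_derivative \<Omega> (T + s) u" "0 \<le> s"
  shows "has_L1_Vdual_derivative \<Omega> T (\<lambda>t. u (t + s))"
proof -
  from assms(1) obtain g :: "real \<Rightarrow> field3 \<Rightarrow> real" where
    linear: "\<forall>t a b \<phi>1 \<phi>2. \<phi>1 \<in> Vsp \<Omega> \<longrightarrow> \<phi>2 \<in> Vsp \<Omega> \<longrightarrow>
        g t (\<lambda>x. a *\<^sub>R \<phi>1 x + b *\<^sub>R \<phi>2 x) = a * g t \<phi>1 + b * g t \<phi>2" and
    bounded: "\<forall>t. bdd_above {\<bar>g t \<phi>\<bar> | \<phi>. \<phi> \<in> Vsp \<Omega> \<and> dir \<Omega> \<phi> \<phi> \<le> 1}" and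
    measurable: "\<forall>\<phi>\<in>Vsp \<Omega>. (\<lambda>t. g t \<phi>) \<in> borel_measurable (lebesgue_on {0..T + s})" and
    integrable: "integrable (lebesgue_on {0..T + s}) (\<lambda>t. Vdual_norm \<Omega> (g t))" and
    derivative: "\<forall>\<phi>\<in>Vsp \<Omega>. weak_time_derivative (T + s) (\<lambda>t. l2ip \<Omega> (u t) \<phi>) (\<lambda>t. g t \<phi>)"
    unfolding has_L1_Vdual_derivative_def weak_time_derivative_def by blast
  have "\<forall>\<phi>\<in>Vsp \<Omega>. (\<lambda>t. g (t + s) \<phi>) \<in> borel_measurable (lebesgue_on {0..T})"
    using measurable by (auto intro!: borel_measurable_delay[OF _ assms(2)])
  moreover have "weak_time_derivative T (\<lambda>t. l2ip \<Omega> (u (t + s)) \<phi>) (\<lambda>t. g (t + s) \<phi>)"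
    if "\<phi> \<in> Vsp \<Omega>" for \<phi>
    using weak_time_derivative_delay[OF derivative[rule_format, OF that] assms(2)] by simp
  ultimately show ?thesis
    using linear bounded integrable_delay[OF integrable assms(2)]
    unfolding has_L1_Vdual_derivative_def weak_time_derivative_def
    by (intro exI[of _ "\<lambda>t. g (t + s)"]) auto
qed

lemma weak_NSE_on_delay:
  assumes "weak_NSE_on \<Omega> \<nu> f (T + s) u" "0 \<le> s"
  shows "weak_NSE_on \<Omega> \<nu> f T (\<lambda>t. u (t + s))"
proof -
  define F where "F \<phi> t = - \<nu> * dir \<Omega> (u t) \<phi> + bform \<Omega> (u t) \<phi> + l2ip \<Omega> (leray \<Omega> f) \<phi>"
    for \<phi> t
  from assms(1) have
    integrable: "\<forall>\<phi>\<in>Vsp \<Omega>. \<forall>\<psi>. test_time (T + s) \<psi> \<longrightarrow>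
      integrable (lebesgue_on {0..T + s}) (\<lambda>t. F \<phi> t * \<psi> t)" and
    derivative: "\<forall>\<phi>\<in>Vsp \<Omega>. weak_time_derivative (T + s) (\<lambda>t. l2ip \<Omega> (u t) \<phi>) (F \<phi>)"
    unfolding weak_NSE_on_def F_def weak_time_derivative_iff by blast+
  have "integrable (lebesgue_on {0..T}) (\<lambda>t. F \<phi> (t + s) * \<psi> t)"
    if "\<phi> \<in> Vsp \<Omega>" "test_time T \<psi>" for \<phi> \<psi>
  proof -
    have "integrable (lebesgue_on {0..T + s}) (\<lambda>t. F \<phi> t * \<psi> (t - s))"
      using integrable that(1) test_time_delay[OF that(2) assms(2)] by blast
    from integrable_delay[OF this assms(2)] show ?thesis
      by simp
  qed
  moreover have "weak_time_derivative T (\<lambda>t. l2ip \<Omega> (u (t + s)) \<phi>) (\<lambda>t. F \<phi> (t + s))"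
    if "\<phi> \<in> Vsp \<Omega>" for \<phi>
    using weak_time_derivative_delay[OF derivative[rule_format, OF that] assms(2)] by simp
  ultimately show ?thesis
    unfolding weak_NSE_on_def weak_time_derivative_iff F_def by blast
qed

lemma weak_sols_delay:
  assumes "u \<in> weak_sols \<Omega> \<nu> f" "0 \<le> s"
  shows "(\<lambda>t. u (t + s)) \<in> weak_sols \<Omega> \<nu> f"
  unfolding weak_sols_iff
proof (intro allI impI)
  fix T :: real assume "0 < T"
  with assms have "in_Linf_H \<Omega> (T + s) u \<and> in_L2_V \<Omega> (T + s) u \<and>
      has_L1_Vdual_derivative \<Omega> (T + s) u \<and> weak_NSE_on \<Omega> \<nu> f (T + s) u"
    unfolding weak_sols_iff by simp
  with assms(2) show "in_Linf_H \<Omega> T (\<lambda>t. u (t + s)) \<and> in_L2_V \<Omega> T (\<lambda>t. u (t + s)) \<and>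
      has_L1_Vdual_derivative \<Omega> T (\<lambda>t. u (t + s)) \<and> weak_NSE_on \<Omega> \<nu> f T (\<lambda>t. u (t + s))"
    by (simp add: in_Linf_H_delay in_L2_V_delay has_L1_Vdual_derivative_delay weak_NSE_on_delay)
qed

definition long_time_trajectories ::
    "(real^3) set \<Rightarrow> real \<Rightarrow> field3 \<Rightarrow> (nat \<Rightarrow> real) \<Rightarrow> (nat \<Rightarrow> field3) \<Rightarrow> (nat \<Rightarrow> real)
      \<Rightarrow> (nat \<Rightarrow> real \<Rightarrow> field3) \<Rightarrow> bool" where
  "long_time_trajectories \<Omega> \<nu> f t u0 Ns S \<longleftrightarrow>
     (\<forall>j. t j \<ge> 0) \<and> filterlim t at_top sequentially \<and>
     (\<forall>j. u0 j \<in> B0 \<Omega> \<nu> f) \<and> (\<forall>j. Ns j > 0) \<and> filterlim Ns at_top sequentially \<and>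
     (\<forall>j. mild_sol \<Omega> \<nu> f (Ns j) (u0 j) (S j))"

definition weakly_tracks ::
    "(real^3) set \<Rightarrow> (nat \<Rightarrow> real \<Rightarrow> field3) \<Rightarrow> (nat \<Rightarrow> real) \<Rightarrow> (real \<Rightarrow> field3) \<Rightarrow> bool" where
  "weakly_tracks \<Omega> S t u \<longleftrightarrow>
     (\<forall>t0\<ge>0. \<forall>r::nat \<Rightarrow> real. (\<forall>j. r j \<ge> 0) \<and> r \<longlonglongrightarrow> t0 \<longrightarrow>
        wconv \<Omega> (\<lambda>j. S j (r j + t j)) (u t0))"

lemma KN_iff_of_attractor:
  assumes "u 0 \<in> attractor \<Omega> \<nu> f"
  shows "u \<in> KN \<Omega> \<nu> f \<longleftrightarrow> u \<in> weak_sols \<Omega> \<nu> f \<and>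
    (\<exists>t u0 Ns S. long_time_trajectories \<Omega> \<nu> f t u0 Ns S \<and> weakly_tracks \<Omega> S t u)"
  using assms unfolding KN_def long_time_trajectories_def weakly_tracks_def by auto

lemma long_time_trajectories_delay:
  assumes "long_time_trajectories \<Omega> \<nu> f t u0 Ns S" "0 \<le> s"
  shows "long_time_trajectories \<Omega> \<nu> f (\<lambda>j. t j + s) u0 Ns S"
proof -
  have "filterlim t at_top sequentially"
    using assms(1) by (simp add: long_time_trajectories_def)
  from filterlim_tendsto_add_at_top[OF tendsto_const this]
  have "filterlim (\<lambda>j. t j + s) at_top sequentially"
    by (simp add: add.commute)
  then show ?thesis
    using assms by (simp add: long_time_trajectories_def add_nonneg_nonneg)
qed

lemma weakly_tracks_delay:
  assumes "weakly_tracks \<Omega> S t u" "0 \<le> s"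
  shows "weakly_tracks \<Omega> S (\<lambda>j. t j + s) (\<lambda>\<tau>. u (\<tau> + s))"
  unfolding weakly_tracks_def
proof (intro allI impI)
  fix t0 :: real and r :: "nat \<Rightarrow> real"
  assume "0 \<le> t0" "(\<forall>j. 0 \<le> r j) \<and> r \<longlonglongrightarrow> t0"
  then have "0 \<le> t0 + s" "(\<forall>j. 0 \<le> r j + s) \<and> (\<lambda>j. r j + s) \<longlonglongrightarrow> t0 + s"
    using assms(2) by (auto intro: tendsto_add)
  then have "wconv \<Omega> (\<lambda>j. S j ((r j + s) + t j)) (u (t0 + s))"
    by (intro assms(1)[unfolded weakly_tracks_def, rule_format]) simp_all
  then show "wconv \<Omega> (\<lambda>j. S j (r j + (t j + s))) (u (t0 + s))"
    by (simp add: ac_simps)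
qed

lemma weakly_tracks_imp_attractor:
  assumes "long_time_trajectories \<Omega> \<nu> f t u0 Ns S" "weakly_tracks \<Omega> S t u"
  shows "u 0 \<in> attractor \<Omega> \<nu> f"
proof -
  have "wconv \<Omega> (\<lambda>j. S j (0 + t j)) (u 0)"
    by (intro assms(2)[unfolded weakly_tracks_def, rule_format]) simp_all
  then show ?thesis
    using assms(1) unfolding attractor_def long_time_trajectories_def wconv_def by auto
qed

theorem lemma4p6:
  fixes \<Omega> :: "(real^3) set" and \<nu> :: real and f :: field3
    and u :: "real \<Rightarrow> field3" and s :: real
  assumes "smooth_bounded_domain \<Omega>" and "\<nu> > 0" and "L2field \<Omega> f"
    and "fsig_bounded \<Omega> f"
    and "u \<in> KN \<Omega> \<nu> f" and "u 0 \<in> attractor \<Omega> \<nu> f" and "s > 0"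
  shows "(\<lambda>t. u (t + s)) \<in> KN \<Omega> \<nu> f"
proof -
  have "0 \<le> s" using \<open>s > 0\<close> by simp
  from assms(5,6) obtain t u0 Ns S where
    weak: "u \<in> weak_sols \<Omega> \<nu> f" and
    trajectories: "long_time_trajectories \<Omega> \<nu> f t u0 Ns S" and
    tracks: "weakly_tracks \<Omega> S t u"
    by (auto simp: KN_iff_of_attractor)
  have trajectories': "long_time_trajectories \<Omega> \<nu> f (\<lambda>j. t j + s) u0 Ns S"
    using long_time_trajectories_delay[OF trajectories \<open>0 \<le> s\<close>] .
  have tracks': "weakly_tracks \<Omega> S (\<lambda>j. t j + s) (\<lambda>\<tau>. u (\<tau> + s))"
    using weakly_tracks_delay[OF tracks \<open>0 \<le> s\<close>] .
  have "(\<lambda>\<tau>. u (\<tau> + s)) 0 \<in> attractor \<Omega> \<nu> f"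
    using weakly_tracks_imp_attractor[OF trajectories' tracks'] .
  then show ?thesis
    using weak_sols_delay[OF weak \<open>0 \<le> s\<close>] trajectories' tracks'
    by (auto simp: KN_iff_of_attractor)
qed

end
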